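(* The genus $g$ partition function $Z_V^{(g)}$ satisfies $\mathcal L_rZ_V^{(g)}=0$ for $r=-1,0,1$, where \begin{align*} \mathcal L_{-1}&=-\sum_{a\in\mathcal I}\partial_{w_a},\qquad \mathcal L_0=-\sum_{a\in\mathcal I}w_a\partial_{w_a}-2\sum_{a\in\mathcal I_+}\rho_a\partial_{\rho_a},\\ \mathcal L_1&=-\sum_{a\in\mathcal I}(w_a^2+\rho_{|a|})\partial_{w_a}-2\sum_{a\in\mathcal I_+}(w_a+w_{-a})\rho_a\partial_{\rho_a}. \end{align*}
   Context: $V=\bigoplus_{n\ge0}V_n$ is a simple, self-dual vertex operator algebra of strong CFT type ($V_0=\mathbb C\mathbb1$, $L(1)V_1=0$) with Virasoro modes $L(n)$ and $\mathrm{wt}(v)=n$ for $v\in V_n$. $\langle\cdot,\cdot\rangle_1$ is the unique invariant bilinear form with $\langle\mathbb1,\mathbb1\rangle_1=1$. Genus zero $n$-point function: $Z^{(0)}(v_1,y_1;\dots;v_n,y_n)=\langle\mathbb1,Y(v_1,y_1)\cdots Y(v_n,y_n)\mathbb1\rangle_1$. Let $g\ge1$, $\mathcal I=\{\pm1,\dots,\pm g\}$, $\mathcal I_+=\{1,\dots,g\}$, formal variables $w_a$ ($a\in\mathcal I$), $\rho_a$ ($a\in\mathcal I_+$). For each $a\in\mathcal I_+$ let $b_a$ run over a homogeneous basis of $V$, $\bar b_a$ the dual basis for $\langle\cdot,\cdot\rangle_1$, and $b_{-a}=\rho_a^{\mathrm{wt}(b_a)}\bar b_a$. The genus $g$ formal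 $n$-point function is $Z_V^{(g)}(v_1,y_1;\dots;v_n,y_n)=\sum_{b_1,\dots,b_g}Z^{(0)}(v_1,y_1;\dots;v_n,y_n;b_{-1},w_{-1};b_1,w_1;\dots;b_{-g},w_{-g};b_g,w_g)$ (formal power series in the $\rho_a$), and the partition function $Z_V^{(g)}$ is the case $n=0$. *)

theory Defs
  imports Complex_Main "HOL-Library.FuncSet"
begin

(* A vertex operator algebra is modelled on a type 'v with a complex scalar
   multiplication sm :: complex => 'v => 'v.  The vertex operator is given by
   its modes:  Y u n v = u_n v, i.e.  Y(u,z) = sum_n u_n z^(-n-1). *)

type_synonym 'v vmodes = "'v \<Rightarrow> int \<Rightarrow> 'v \<Rightarrow> 'v"

definition Lv :: "'v vmodes \<Rightarrow> 'v \<Rightarrow> int \<Rightarrow> 'v \<Rightarrow> 'v" where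
  "Lv Y om m = Y om (m + 1)"

definition wt_space :: "(complex \<Rightarrow> 'v \<Rightarrow> 'v) \<Rightarrow> 'v vmodes \<Rightarrow> 'v \<Rightarrow> nat \<Rightarrow> 'v set" where
  "wt_space sm Y om n = {v. Lv Y om 0 v = sm (of_nat n) v}"

definition sign_int :: "int \<Rightarrow> complex" where
  "sign_int r = (if even r then 1 else -1)"

(* Vertex operator algebra (Frenkel-Lepowsky-Meurman), Jacobi identity in
   Borcherds mode form, with V = (+)_{n>=0} V_n, dim V_n finite. *)
definition is_VOA :: "(complex \<Rightarrow> 'v::ab_group_add \<Rightarrow> 'v) \<Rightarrow> 'v vmodes \<Rightarrow> 'v \<Rightarrow> 'v \<Rightarrow> bool" where
  "is_VOA sm Y vac om \<longleftrightarrow>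
     vector_space sm
   \<and> (\<forall>u n. Vector_Spaces.linear sm sm (Y u n))
   \<and> (\<forall>n v. Vector_Spaces.linear sm sm (\<lambda>u. Y u n v))
   \<and> (\<forall>u v. \<exists>N. \<forall>n\<ge>N. Y u n v = 0)
   \<and> (\<forall>n v. Y vac n v = (if n = -1 then v else 0))
   \<and> (\<forall>u n. 0 \<le> n \<longrightarrow> Y u n vac = 0)
   \<and> (\<forall>u. Y u (-1) vac = u)
   \<and> (\<forall>u v w p q r. \<exists>N. \<forall>M\<ge>N.
        (\<Sum>i<M. sm ((of_int p :: complex) gchoose i) (Y (Y u (r + int i) v) (p + q - int i) w))
      = (\<Sum>i<M. sm ((-1) ^ i * ((of_int r :: complex) gchoose i))
            (Y u (p + r - int i) (Y v (q + int i) w)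
             - sm (sign_int r) (Y v (q + r - int i) (Y u (p + int i) w)))))
   \<and> (\<exists>c::complex. \<forall>m n v.
        Lv Y om m (Lv Y om n v) - Lv Y om n (Lv Y om m v)
      = sm (of_int (m - n)) (Lv Y om (m + n) v)
        + (if m + n = 0 then sm ((of_int m ^ 3 - of_int m) / 12 * c) v else 0))
   \<and> (\<forall>u n v. Y (Lv Y om (-1) u) n v = sm (- of_int n) (Y u (n - 1) v))
   \<and> (\<forall>v. \<exists>f N. (\<forall>n. f n \<in> wt_space sm Y om n) \<and> v = (\<Sum>n<N. f n))
   \<and> (\<forall>n. \<exists>S. finite S \<and> wt_space sm Y om n = module.span sm S)"

definition strong_CFT_type :: "(complex \<Rightarrow> 'v::ab_group_add \<Rightarrow> 'v) \<Rightarrow> 'v vmodes \<Rightarrow> 'v \<Rightarrow> 'v \<Rightarrow> bool" where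
  "strong_CFT_type sm Y vac om \<longleftrightarrow>
     wt_space sm Y om 0 = module.span sm {vac}
   \<and> (\<forall>v \<in> wt_space sm Y om 1. Lv Y om 1 v = 0)"

definition simple_VOA :: "(complex \<Rightarrow> 'v::ab_group_add \<Rightarrow> 'v) \<Rightarrow> 'v vmodes \<Rightarrow> bool" where
  "simple_VOA sm Y \<longleftrightarrow>
     (\<forall>I. module.subspace sm I \<and> (\<forall>u n w. w \<in> I \<longrightarrow> Y u n w \<in> I) \<longrightarrow> I = {0} \<or> I = UNIV)"

(* invariant bilinear form (FLM):
   <Y(u,z)v,w> = <v, Y(e^{zL(1)}(-z^{-2})^{L(0)} u, z^{-1}) w>, in modes for u in V_k:
   <u_n v, w> = (-1)^k sum_j 1/j! <v, (L(1)^j u)_{2k-n-j-2} w> *)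
definition invariant_form :: "(complex \<Rightarrow> 'v::ab_group_add \<Rightarrow> 'v) \<Rightarrow> 'v vmodes \<Rightarrow> 'v \<Rightarrow> ('v \<Rightarrow> 'v \<Rightarrow> complex) \<Rightarrow> bool" where
  "invariant_form sm Y om B \<longleftrightarrow>
     (\<forall>u. Vector_Spaces.linear sm (*) (B u))
   \<and> (\<forall>w. Vector_Spaces.linear sm (*) (\<lambda>u. B u w))
   \<and> (\<forall>k u n v w. u \<in> wt_space sm Y om k \<longrightarrow>
        B (Y u n v) w = (-1) ^ k * (\<Sum>j\<le>k. (1 / fact j) *
            B v (Y ((Lv Y om 1 ^^ j) u) (2 * int k - n - int j - 2) w)))"

(* self-dual: V is isomorphic to its contragredient, i.e. V carries a
   nondegenerate invariant bilinear form *)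
definition self_dual :: "(complex \<Rightarrow> 'v::ab_group_add \<Rightarrow> 'v) \<Rightarrow> 'v vmodes \<Rightarrow> 'v \<Rightarrow> bool" where
  "self_dual sm Y om \<longleftrightarrow>
     (\<exists>B. invariant_form sm Y om B
        \<and> (\<forall>v. (\<forall>w. B v w = 0) \<longrightarrow> v = 0)
        \<and> (\<forall>w. (\<forall>v. B v w = 0) \<longrightarrow> w = 0))"

definition Iset :: "nat \<Rightarrow> int set" where
  "Iset g = {a. a \<noteq> 0 \<and> \<bar>a\<bar> \<le> int g}"

(* Formal series in rho_1..rho_g and w_a (a in I) are represented by their
   coefficient functions F k m = coefficient of prod_a rho_a^(k a) * prod_a w_a^(m a),
   with k :: nat => nat (supported in {1..g}) and m :: int => int (supported in I).

   Genus g partition function, n = 0: coefficient of rho^k w^m is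
   sum over b_a in basis of V_{k a} of the coefficient of prod w_a^(m a) in
   <1, Y(bbar_1,w_{-1}) Y(b_1,w_1) ... Y(bbar_g,w_{-g}) Y(b_g,w_g) 1>,
   where Y(u,w) = sum_n u_n w^(-n-1). *)
definition genus_Z ::
  "('v \<Rightarrow> int \<Rightarrow> 'v \<Rightarrow> 'v) \<Rightarrow> 'v \<Rightarrow> ('v \<Rightarrow> 'v \<Rightarrow> complex) \<Rightarrow> (nat \<Rightarrow> 'v set) \<Rightarrow> ('v \<Rightarrow> 'v)
   \<Rightarrow> nat \<Rightarrow> (nat \<Rightarrow> nat) \<Rightarrow> (int \<Rightarrow> int) \<Rightarrow> complex" where
  "genus_Z Y vac B basis dual g k m =
     (if (\<forall>a. a \<notin> {1..g} \<longrightarrow> k a = 0) \<and> (\<forall>a. a \<notin> Iset g \<longrightarrow> m a = 0) then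
        (\<Sum>\<beta>\<in>Pi\<^sub>E {1..g} (\<lambda>a. basis (k a)).
           B vac (foldr (\<lambda>a x. Y (dual (\<beta> a)) (- m (- int a) - 1) (Y (\<beta> a) (- m (int a) - 1) x))
                    [1..<g+1] vac))
      else 0)"

definition L_m1 :: "nat \<Rightarrow> ((nat \<Rightarrow> nat) \<Rightarrow> (int \<Rightarrow> int) \<Rightarrow> complex) \<Rightarrow> (nat \<Rightarrow> nat) \<Rightarrow> (int \<Rightarrow> int) \<Rightarrow> complex" where
  "L_m1 g F k m = - (\<Sum>a\<in>Iset g. of_int (m a + 1) * F k (m(a := m a + 1)))"

definition L_0 :: "nat \<Rightarrow> ((nat \<Rightarrow> nat) \<Rightarrow> (int \<Rightarrow> int) \<Rightarrow> complex) \<Rightarrow> (nat \<Rightarrow> nat) \<Rightarrow> (int \<Rightarrow> int) \<Rightarrow> complex" where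
  "L_0 g F k m = - (\<Sum>a\<in>Iset g. of_int (m a) * F k m) - 2 * (\<Sum>a\<in>{1..g}. of_nat (k a) * F k m)"

definition L_1 :: "nat \<Rightarrow> ((nat \<Rightarrow> nat) \<Rightarrow> (int \<Rightarrow> int) \<Rightarrow> complex) \<Rightarrow> (nat \<Rightarrow> nat) \<Rightarrow> (int \<Rightarrow> int) \<Rightarrow> complex" where
  "L_1 g F k m =
     - (\<Sum>a\<in>Iset g.
          of_int (m a - 1) * F k (m(a := m a - 1))
        + (if 1 \<le> k (nat \<bar>a\<bar>)
           then of_int (m a + 1) * F (k(nat \<bar>a\<bar> := k (nat \<bar>a\<bar>) - 1)) (m(a := m a + 1))
           else 0))
     - 2 * (\<Sum>a\<in>{1..g}. of_nat (k a) *
          (F k (m(int a := m (int a) - 1)) + F k (m(- int a := m (- int a) - 1))))"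

end

theory Submission
  imports Defs
begin

text \<open>Every coefficient of the genus g partition function is a finite sum, over bases of the
  weight spaces and their dual bases, of genus zero correlators <1, (b_1)_(n_1) ... (b_r)_(n_r) 1>.
  L(-1), L(0), L(1) annihilate the vacuum and, being adjoint to L(1), L(0), L(-1) for the
  invariant form, also the covector <1, ->; commuting them through the product of modes gives
  genus zero Ward identities. For L(-1) and L(0), which act on a mode as a derivative and by
  counting weights, these are already the claimed equations. For L(1) the commutator also
  inserts L(1) b_a and L(1) b_a'. Summed over a basis and its dual, adjointness moves each such
  insertion to an L(-1) acting on the partner state, now of weight k_a - 1; being a derivative,
  it produces the rho_a d/dw_a terms.\<close>

lemmas linear_map_add = module_hom.add[OF module_hom_iff_linear[THEN iffD2]]
lemmas linear_map_scale = module_hom.scale[OF module_hom_iff_linear[THEN iffD2]]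
lemmas linear_map_zero = module_hom.zero[OF module_hom_iff_linear[THEN iffD2]]
lemmas linear_map_diff = module_hom.diff[OF module_hom_iff_linear[THEN iffD2]]
lemmas linear_map_neg = module_hom.neg[OF module_hom_iff_linear[THEN iffD2]]
lemmas linear_map_sum = module_hom.sum[OF module_hom_iff_linear[THEN iffD2]]

lemma sum_PiE_insert:
  assumes "x \<notin> S"
  shows "(\<Sum>\<beta>\<in>Pi\<^sub>E (insert x S) T. G \<beta>) = (\<Sum>y\<in>T x. \<Sum>\<beta>\<in>Pi\<^sub>E S T. G (\<beta>(x := y)))"
  unfolding PiE_insert_eq
  by (subst sum.reindex[OF inj_combinator[OF assms]]) (simp add: sum.cartesian_product split_def)

lemma sum_PiE_remove:
  assumes "x \<in> S"
  shows "(\<Sum>\<beta>\<in>Pi\<^sub>E S T. G \<beta>) = (\<Sum>y\<in>T x. \<Sum>\<beta>\<in>Pi\<^sub>E (S - {x}) T. G (\<beta>(x := y)))"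
  using sum_PiE_insert[of x "S - {x}" G T] assms by (simp add: insert_absorb)

lemma Iset_eq: "Iset g = int ` {1..g} \<union> (\<lambda>a. - int a) ` {1..g}"
proof (rule set_eqI)
  fix x :: int
  show "x \<in> Iset g \<longleftrightarrow> x \<in> int ` {1..g} \<union> (\<lambda>a. - int a) ` {1..g}"
  proof
    assume x: "x \<in> Iset g"
    show "x \<in> int ` {1..g} \<union> (\<lambda>a. - int a) ` {1..g}"
    proof (cases "x > 0")
      case True
      then have "x \<in> int ` {1..g}" using x by (intro image_eqI[of _ _ "nat x"]) (auto simp: Iset_def)
      then show ?thesis by blast
    next
      case False
      then have "x \<in> (\<lambda>a. - int a) ` {1..g}" using x by (intro image_eqI[of _ _ "nat (- x)"]) (auto simp: Iset_def)
      then show ?thesis by blast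
    qed
  qed (auto simp: Iset_def)
qed

lemma sum_Iset: "(\<Sum>j\<in>Iset g. f j) = (\<Sum>a\<in>{1..g}. f (int a) + f (- int a))"
proof -
  have "(\<Sum>j\<in>Iset g. f j) = (\<Sum>j\<in>int ` {1..g}. f j) + (\<Sum>j\<in>(\<lambda>a. - int a) ` {1..g}. f j)"
    unfolding Iset_eq by (rule sum.union_disjoint) auto
  also have "\<dots> = (\<Sum>a\<in>{1..g}. f (int a)) + (\<Sum>a\<in>{1..g}. f (- int a))"
    by (simp add: sum.reindex inj_on_def)
  finally show ?thesis by (simp add: sum.distrib)
qed

lemma nat_abs_in_Iset: "j \<in> Iset g \<Longrightarrow> nat \<bar>j\<bar> \<in> {1..g}"
  by (auto simp: Iset_def)

lemma pm_in_Iset: "a \<in> {1..g} \<Longrightarrow> int a \<in> Iset g \<and> - int a \<in> Iset g"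
  by (auto simp: Iset_def)

section \<open>Coefficients of the genus g partition function\<close>

primrec mode_product :: "('v \<Rightarrow> int \<Rightarrow> 'v \<Rightarrow> 'v) \<Rightarrow> int list \<Rightarrow> (int \<Rightarrow> 'v) \<Rightarrow> (int \<Rightarrow> int) \<Rightarrow> 'v \<Rightarrow> 'v"
where
  "mode_product Y [] V M x = x"
| "mode_product Y (j # js) V M x = Y (V j) (M j) (mode_product Y js V M x)"

lemma mode_product_cong:
  "(\<And>j. j \<in> set js \<Longrightarrow> V j = V' j \<and> M j = M' j) \<Longrightarrow> mode_product Y js V M x = mode_product Y js V' M' x"
  by (induct js) auto

lemma mode_product_upd_notin:
  "j \<notin> set js \<Longrightarrow> mode_product Y js (V(j := u)) (M(j := n)) x = mode_product Y js V M x"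
  "j \<notin> set js \<Longrightarrow> mode_product Y js (V(j := u)) M x = mode_product Y js V M x"
  "j \<notin> set js \<Longrightarrow> mode_product Y js V (M(j := n)) x = mode_product Y js V M x"
  by (auto intro: mode_product_cong)

definition handle_indices :: "nat \<Rightarrow> int list" where
  "handle_indices g = concat (map (\<lambda>a. [- int a, int a]) [1..<g+1])"

lemma set_handle_indices: "set (handle_indices g) = Iset g"
  unfolding Iset_eq handle_indices_def by auto

lemma distinct_handle_indices: "distinct (handle_indices g)"
  by (induct g) (auto simp: handle_indices_def)

definition handle_states :: "('v \<Rightarrow> 'v) \<Rightarrow> (nat \<Rightarrow> 'v) \<Rightarrow> int \<Rightarrow> 'v" where
  "handle_states dual \<beta> j = (if j < 0 then dual (\<beta> (nat (- j))) else \<beta> (nat j))"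

text \<open>The coefficient of w^m in Y(u, w) is the mode u_(-m-1).\<close>

definition mode_index :: "(int \<Rightarrow> int) \<Rightarrow> int \<Rightarrow> int" where
  "mode_index m j = - m j - 1"

lemma mode_index_upd: "mode_index (m(a := x)) = (mode_index m)(a := - x - 1)"
  by (auto simp: mode_index_def)

lemma handle_states_upd:
  "1 \<le> a \<Longrightarrow> handle_states dual (\<beta>(a := x)) = (handle_states dual \<beta>)(- int a := dual x, int a := x)"
  by (rule ext) (auto simp: handle_states_def)

lemma foldr_eq_mode_product:
  "\<forall>a\<in>set as. 1 \<le> a \<Longrightarrow>
    foldr (\<lambda>a x. Y (dual (\<beta> a)) (- m (- int a) - 1) (Y (\<beta> a) (- m (int a) - 1) x)) as x
  = mode_product Y (concat (map (\<lambda>a. [- int a, int a]) as)) (handle_states dual \<beta>) (mode_index m) x"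
  by (induct as) (auto simp: handle_states_def mode_index_def)

definition supported :: "nat \<Rightarrow> (nat \<Rightarrow> nat) \<Rightarrow> (int \<Rightarrow> int) \<Rightarrow> bool" where
  "supported g k m \<longleftrightarrow> (\<forall>a. a \<notin> {1..g} \<longrightarrow> k a = 0) \<and> (\<forall>a. a \<notin> Iset g \<longrightarrow> m a = 0)"

lemma supported_upd_m: "j \<in> Iset g \<Longrightarrow> supported g k (m(j := x)) = supported g k m"
  unfolding supported_def by auto

lemma supported_upd_k: "a \<in> {1..g} \<Longrightarrow> supported g (k(a := y)) m = supported g k m"
  unfolding supported_def by auto

lemma genus_Z_supported:
  assumes "supported g k m"
  shows "genus_Z Y vac B basis dual g k m
    = (\<Sum>\<beta>\<in>Pi\<^sub>E {1..g} (\<lambda>a. basis (k a)).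
         B vac (mode_product Y (handle_indices g) (handle_states dual \<beta>) (mode_index m) vac))"
proof -
  have supp: "(\<forall>a. a \<notin> {1..g} \<longrightarrow> k a = 0) \<and> (\<forall>a. a \<notin> Iset g \<longrightarrow> m a = 0)"
    using assms by (simp add: supported_def)
  have "\<forall>a\<in>set [1..<g+1]. 1 \<le> a" by (simp del: upt_Suc)
  note foldr_conv = foldr_eq_mode_product[OF this, of Y dual _ m vac]
  show ?thesis
    unfolding genus_Z_def if_P[OF supp] foldr_conv handle_indices_def ..
qed

lemma genus_Z_unsupported: "\<not> supported g k m \<Longrightarrow> genus_Z Y vac B basis dual g k m = 0"
  unfolding genus_Z_def supported_def by (rule if_not_P)

text \<open>The Virasoro mode L(n) is Y om (n + 1), so L(-1), L(0), L(1) appear as Y om 0, Y om 1, Y om 2.\<close>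

locale VOA_dual_bases =
  fixes sm :: "complex \<Rightarrow> 'v::ab_group_add \<Rightarrow> 'v"
    and Y :: "'v \<Rightarrow> int \<Rightarrow> 'v \<Rightarrow> 'v"
    and vac om :: 'v
    and B :: "'v \<Rightarrow> 'v \<Rightarrow> complex"
    and basis :: "nat \<Rightarrow> 'v set"
    and dual :: "'v \<Rightarrow> 'v"
  assumes VOA: "is_VOA sm Y vac om"
    and simple: "simple_VOA sm Y"
    and CFT_type: "strong_CFT_type sm Y vac om"
    and form: "invariant_form sm Y om B"
    and B_vac_vac: "B vac vac = 1"
    and basis: "\<And>n. finite (basis n) \<and> basis n \<subseteq> wt_space sm Y om n
                  \<and> module.span sm (basis n) = wt_space sm Y om n"
    and dual_basis: "\<And>n b b'. b \<in> basis n \<Longrightarrow> b' \<in> basis n \<Longrightarrow>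
                  dual b \<in> wt_space sm Y om n \<and> B (dual b) b' = (if b = b' then 1 else 0)"
begin

sublocale vector_space sm
  using VOA by (simp add: is_VOA_def)

abbreviation W :: "nat \<Rightarrow> 'v set" where
  "W n \<equiv> wt_space sm Y om n"

lemma Y_linear: "Vector_Spaces.linear sm sm (Y u n)"
  using VOA unfolding is_VOA_def by (elim conjE) blast

lemma Y_linear_state: "Vector_Spaces.linear sm sm (\<lambda>u. Y u n v)"
  using VOA unfolding is_VOA_def by (elim conjE) blast

lemma nonneg_mode_vacuum: "0 \<le> n \<Longrightarrow> Y u n vac = 0"
  using VOA unfolding is_VOA_def by (elim conjE) blast

lemma vacuum_creation: "Y u (-1) vac = u"
  using VOA unfolding is_VOA_def by (elim conjE) blast

lemma L_minus1_derivative: "Y (Y om 0 u) n v = sm (- of_int n) (Y u (n - 1) v)"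
  using VOA unfolding is_VOA_def Lv_def by simp

lemma weight_decomposition: "\<exists>f N. (\<forall>n. f n \<in> W n) \<and> v = (\<Sum>n<N. f n)"
  using VOA unfolding is_VOA_def by (elim conjE) (erule allE[of _ v])

lemma borcherds: "\<exists>N. \<forall>M\<ge>N.
    (\<Sum>i<M. sm ((of_int p :: complex) gchoose i) (Y (Y u (r + int i) v) (p + q - int i) w))
  = (\<Sum>i<M. sm ((-1) ^ i * ((of_int r :: complex) gchoose i))
        (Y u (p + r - int i) (Y v (q + int i) w)
         - sm (sign_int r) (Y v (q + r - int i) (Y u (p + int i) w))))"
  using VOA by (simp only: is_VOA_def)

lemma virasoro_bracket:
  assumes "m + n \<noteq> 0"
  shows "Y om (m + 1) (Y om (n + 1) v) - Y om (n + 1) (Y om (m + 1) v)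
       = sm (of_int (m - n)) (Y om (m + n + 1) v)"
proof -
  obtain c where "\<forall>m n v. Lv Y om m (Lv Y om n v) - Lv Y om n (Lv Y om m v)
      = sm (of_int (m - n)) (Lv Y om (m + n) v)
        + (if m + n = 0 then sm ((of_int m ^ 3 - of_int m) / 12 * c) v else 0)"
    using VOA unfolding is_VOA_def by (elim conjE) blast
  then show ?thesis using assms by (simp add: Lv_def add.assoc)
qed

lemma weight0_space: "W 0 = span {vac}"
  using CFT_type unfolding strong_CFT_type_def by blast

lemma B_linear: "Vector_Spaces.linear sm (*) (B u)"
  using form unfolding invariant_form_def by blast

lemma B_linear_left: "Vector_Spaces.linear sm (*) (\<lambda>u. B u w)"
  using form unfolding invariant_form_def by blast

lemma B_invariant: "u \<in> W k \<Longrightarrow>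
    B (Y u n v) w = (-1) ^ k * (\<Sum>j\<le>k. (1 / fact j) * B v (Y ((Lv Y om 1 ^^ j) u) (2 * int k - n - int j - 2) w))"
  using form unfolding invariant_form_def by blast

lemma basis_finite: "finite (basis n)"
  and basis_subset: "basis n \<subseteq> W n"
  and span_basis: "span (basis n) = W n"
  using basis by blast+

lemma dual_in_W: "b \<in> basis n \<Longrightarrow> dual b \<in> W n"
  and B_dual: "b \<in> basis n \<Longrightarrow> b' \<in> basis n \<Longrightarrow> B (dual b) b' = (if b = b' then 1 else 0)"
  using dual_basis by blast+

lemmas Y_add = linear_map_add[OF Y_linear]
  and Y_scale = linear_map_scale[OF Y_linear]
  and Y_zero [simp] = linear_map_zero[OF Y_linear]
  and Y_neg = linear_map_neg[OF Y_linear]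
  and Y_sum = linear_map_sum[OF Y_linear]
lemmas Y_scale_state = linear_map_scale[OF Y_linear_state, simplified]
  and Y_zero_state [simp] = linear_map_zero[OF Y_linear_state, simplified]
  and Y_sum_state = linear_map_sum[OF Y_linear_state, simplified]
lemmas B_add = linear_map_add[OF B_linear]
  and B_scale = linear_map_scale[OF B_linear]
  and B_zero [simp] = linear_map_zero[OF B_linear]
  and B_neg = linear_map_neg[OF B_linear]
  and B_sum = linear_map_sum[OF B_linear]
lemmas B_add_left = linear_map_add[OF B_linear_left, simplified]
  and B_scale_left = linear_map_scale[OF B_linear_left, simplified]
  and B_zero_left [simp] = linear_map_zero[OF B_linear_left, simplified]
  and B_diff_left = linear_map_diff[OF B_linear_left, simplified]
  and B_sum_left = linear_map_sum[OF B_linear_left, simplified]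

lemma omega_commutator:
  "Y om (int P) (Y u n y) - Y u n (Y om (int P) y)
   = (\<Sum>i\<le>P. sm (of_nat (P choose i)) (Y (Y om (int i) u) (int P + n - int i) y))"
proof -
  obtain N where N: "\<forall>M\<ge>N.
      (\<Sum>i<M. sm ((of_int (int P) :: complex) gchoose i) (Y (Y om (0 + int i) u) (int P + n - int i) y))
    = (\<Sum>i<M. sm ((-1) ^ i * ((of_int 0 :: complex) gchoose i))
          (Y om (int P + 0 - int i) (Y u (n + int i) y)
           - sm (sign_int 0) (Y u (n + 0 - int i) (Y om (int P + int i) y))))"
    using borcherds[of "int P" om 0 u n y] by blast
  define M where "M = max N (Suc P)"
  have "P < M" "N \<le> M" by (auto simp: M_def)
  have "(\<Sum>i<M. sm ((of_int (int P) :: complex) gchoose i) (Y (Y om (0 + int i) u) (int P + n - int i) y))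
      = (\<Sum>i\<le>P. sm (of_nat (P choose i)) (Y (Y om (int i) u) (int P + n - int i) y))"
    by (simp add: binomial_gbinomial[symmetric])
       (rule sum.mono_neutral_right, use \<open>P < M\<close> in auto)
  moreover have "(\<Sum>i<M. sm ((-1) ^ i * ((of_int 0 :: complex) gchoose i))
          (Y om (int P + 0 - int i) (Y u (n + int i) y)
           - sm (sign_int 0) (Y u (n + 0 - int i) (Y om (int P + int i) y))))
      = Y om (int P) (Y u n y) - Y u n (Y om (int P) y)"
    using \<open>P < M\<close>
    by (subst sum.mono_neutral_right[where S = "{0}"]) (auto simp: gbinomial_0_left sign_int_def)
  ultimately show ?thesis
    using N \<open>N \<le> M\<close> by simp
qed

lemma L_minus1_commutator: "Y om 0 (Y u n y) - Y u n (Y om 0 y) = sm (- of_int n) (Y u (n - 1) y)"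
  using omega_commutator[of 0 u n y] L_minus1_derivative[of u n y] by simp

lemma L0_commutator:
  "u \<in> W K \<Longrightarrow> Y om 1 (Y u n y) - Y u n (Y om 1 y) = sm (of_nat K - of_int n - 1) (Y u n y)"
  using omega_commutator[of 1 u n y] L_minus1_derivative[of u "n + 1" y]
  by (simp add: Lv_def wt_space_def Y_scale_state algebra_simps)

lemma L1_commutator:
  assumes "u \<in> W K"
  shows "Y om 2 (Y u n y) - Y u n (Y om 2 y)
       = sm (2 * of_nat K - of_int n - 2) (Y u (n + 1) y) + Y (Y om 2 u) n y"
proof -
  have "Y om (int 2) (Y u n y) - Y u n (Y om (int 2) y)
      = Y (Y om 0 u) (n + 2) y + sm 2 (Y (Y om 1 u) (n + 1) y) + Y (Y om 2 u) n y"
    unfolding omega_commutator by (simp add: numeral_2_eq_2 atMost_Suc algebra_simps)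
  then show ?thesis
    using L_minus1_derivative[of u "n + 2" y] assms
    by (simp add: Lv_def wt_space_def Y_scale_state algebra_simps)
qed

lemma L_vacuum: "Y om 0 vac = 0" "Y om 1 vac = 0" "Y om 2 vac = 0"
  by (simp_all add: nonneg_mode_vacuum)

lemma L0_omega: "Y om 1 om = sm 2 om"
  using virasoro_bracket[of 0 "-2" vac] by (simp add: vacuum_creation L_vacuum)

lemma L1_omega: "Y om 2 om = 0"
  using virasoro_bracket[of 1 "-2" vac] by (simp add: vacuum_creation L_vacuum)

lemma omega_weight: "om \<in> W 2"
  using L0_omega by (simp add: wt_space_def Lv_def)

lemma L1_lowers_weight: "v \<in> W (Suc K) \<Longrightarrow> Y om 2 v \<in> W K"
proof -
  assume v: "v \<in> W (Suc K)"
  have "Y om 1 (Y om 2 v) = Y om 2 (Y om 1 v) - Y om 2 v"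
    using virasoro_bracket[of 0 1 v] by (simp add: algebra_simps)
  also have "\<dots> = sm (of_nat K) (Y om 2 v)"
    using v by (simp add: wt_space_def Lv_def Y_add Y_scale algebra_simps)
  finally show ?thesis by (simp add: wt_space_def Lv_def)
qed

lemma L_minus1_raises_weight: "v \<in> W K \<Longrightarrow> Y om 0 v \<in> W (Suc K)"
proof -
  assume v: "v \<in> W K"
  have "Y om 1 (Y om 0 v) = Y om 0 (Y om 1 v) + Y om 0 v"
    using virasoro_bracket[of 0 "-1" v] by (simp add: algebra_simps)
  also have "\<dots> = sm (of_nat (Suc K)) (Y om 0 v)"
    using v by (simp add: wt_space_def Lv_def Y_scale algebra_simps)
  finally show ?thesis by (simp add: wt_space_def Lv_def)
qed

lemma L1_weight0: "v \<in> W 0 \<Longrightarrow> Y om 2 v = 0"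
  using weight0_space L_vacuum by (auto simp: span_singleton Y_scale)

section \<open>The invariant form and dual bases\<close>

lemma B_omega_adjoint: "B (Y om n v) w = B v (Y om (2 - n) w)"
proof -
  have "B (Y om n v) w = (-1) ^ 2 * (\<Sum>j\<le>2. (1 / fact j) *
          B v (Y ((Lv Y om 1 ^^ j) om) (2 * int 2 - n - int j - 2) w))"
    by (rule B_invariant[OF omega_weight])
  also have "\<dots> = B v (Y om (2 - n) w)"
    by (simp add: numeral_2_eq_2 atMost_Suc Lv_def L1_omega)
  finally show ?thesis .
qed

lemma B_L0_adjoint: "B (Y om 1 v) w = B v (Y om 1 w)"
  and B_L1_adjoint: "B (Y om 2 v) w = B v (Y om 0 w)"
  and B_L_minus1_adjoint: "B (Y om 0 v) w = B v (Y om 2 w)"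
  using B_omega_adjoint[of 1] B_omega_adjoint[of 2] B_omega_adjoint[of 0] by simp_all

lemma B_vacuum_L: "B vac (Y om 0 x) = 0" "B vac (Y om 1 x) = 0" "B vac (Y om 2 x) = 0"
  using B_L1_adjoint[of vac x] B_L0_adjoint[of vac x] B_L_minus1_adjoint[of vac x]
  by (simp_all add: L_vacuum)

lemma subspace_W: "subspace (W n)"
  by (rule subspaceI)
     (auto simp: wt_space_def Lv_def Y_add Y_scale scale_left_commute scale_right_distrib)

lemma B_weight_orthogonal:
  assumes "z \<in> W K" "w \<in> W n" "K \<noteq> n"
  shows "B z w = 0"
proof -
  have "of_nat K * B z w = of_nat n * B z w"
    using B_L0_adjoint[of z w] assms by (simp add: wt_space_def Lv_def B_scale_left B_scale)
  then show ?thesis using assms(3) by simp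
qed

text \<open>The radical of the form is an ideal not containing the vacuum, so simplicity kills it.\<close>

lemma B_nondegenerate: "(\<And>w. B z w = 0) \<Longrightarrow> z = 0"
proof -
  assume z: "\<And>w. B z w = 0"
  define R where "R = {z. \<forall>w. B z w = 0}"
  have "subspace R"
    by (rule subspaceI) (auto simp: R_def B_add_left B_scale_left)
  moreover have "Y u n x \<in> R" if "x \<in> R" for u n x
  proof -
    obtain f N where f: "\<And>n. f n \<in> W n" and u: "u = (\<Sum>n<N. f n)"
      using weight_decomposition[of u] by blast
    have "B (Y (f k) n x) w = 0" for k w
      using B_invariant[OF f, of k n x w] that by (simp add: R_def)
    then show ?thesis by (simp add: R_def u Y_sum_state B_sum_left)
  qed
  ultimately have "R = {0} \<or> R = UNIV"
    using simple unfolding simple_VOA_def by blast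
  moreover have "vac \<notin> R" using B_vac_vac by (auto simp: R_def intro!: exI[of _ vac])
  ultimately show "z = 0" using z by (auto simp: R_def)
qed

lemma span_basis_conv: "W K = range (\<lambda>u. \<Sum>b\<in>basis K. sm (u b) b)"
  using span_basis[of K] span_finite[OF basis_finite] by simp

lemma basis_expansion:
  assumes "y \<in> W K"
  shows "y = (\<Sum>b\<in>basis K. sm (B (dual b) y) b)"
proof -
  obtain u where u: "y = (\<Sum>b\<in>basis K. sm (u b) b)"
    using assms span_basis_conv by blast
  have "B (dual b) y = u b" if b: "b \<in> basis K" for b
  proof -
    have "B (dual b) y = (\<Sum>b'\<in>basis K. if b' = b then u b' else 0)"
      unfolding u B_sum B_scale by (rule sum.cong) (use B_dual[OF b] in auto)
    then show ?thesis using basis_finite b by simp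
  qed
  then show ?thesis using u by simp
qed

lemma dual_basis_expansion:
  assumes x: "x \<in> W K"
  shows "x = (\<Sum>b\<in>basis K. sm (B x b) (dual b))"
proof -
  define z where "z = x - (\<Sum>b\<in>basis K. sm (B x b) (dual b))"
  have z_W: "z \<in> W K" unfolding z_def
    by (intro subspace_diff[OF subspace_W] x subspace_sum[OF subspace_W]
        subspace_scale[OF subspace_W] dual_in_W)
  have z_basis: "B z b = 0" if b: "b \<in> basis K" for b
  proof -
    have "(\<Sum>b'\<in>basis K. B x b' * B (dual b') b) = (\<Sum>b'\<in>basis K. if b' = b then B x b' else 0)"
      by (rule sum.cong) (use B_dual b in auto)
    then show ?thesis using basis_finite b by (simp add: z_def B_diff_left B_sum_left B_scale_left)
  qed
  have "B z w = 0" for w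
  proof -
    obtain f N where f: "\<And>n. f n \<in> W n" and w: "w = (\<Sum>n<N. f n)"
      using weight_decomposition[of w] by blast
    have "B z (f n) = 0" for n
    proof (cases "n = K")
      case True
      then obtain u where "f n = (\<Sum>b\<in>basis K. sm (u b) b)"
        using f span_basis_conv by blast
      then show ?thesis by (simp add: B_sum B_scale z_basis)
    qed (use B_weight_orthogonal[OF z_W f] in simp)
    then show ?thesis by (simp add: w B_sum)
  qed
  then have "z = 0" by (rule B_nondegenerate)
  then show ?thesis by (simp add: z_def)
qed

definition bilinear_form :: "('v \<Rightarrow> 'v \<Rightarrow> complex) \<Rightarrow> bool" where
  "bilinear_form E \<longleftrightarrow>
     (\<forall>y. Vector_Spaces.linear sm (*) (\<lambda>x. E x y)) \<and> (\<forall>x. Vector_Spaces.linear sm (*) (E x))"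

lemma bilinear_form_expand_left:
  assumes "bilinear_form E"
  shows "E (\<Sum>c\<in>C. sm (f c) (x c)) y = (\<Sum>c\<in>C. f c * E (x c) y)"
proof -
  have lin: "Vector_Spaces.linear sm (*) (\<lambda>x. E x y)"
    using assms by (simp add: bilinear_form_def)
  show ?thesis by (simp add: linear_map_sum[OF lin] linear_map_scale[OF lin])
qed

lemma bilinear_form_expand_right:
  assumes "bilinear_form E"
  shows "E y (\<Sum>c\<in>C. sm (f c) (x c)) = (\<Sum>c\<in>C. f c * E y (x c))"
proof -
  have lin: "Vector_Spaces.linear sm (*) (E y)"
    using assms by (simp add: bilinear_form_def)
  show ?thesis by (simp add: linear_map_sum[OF lin] linear_map_scale[OF lin])
qed

text \<open>Expand L(1) b in the dual basis one weight lower and use that L(1) is adjoint to L(-1).\<close>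

lemma dual_basis_L1_transfer_left:
  assumes E: "bilinear_form E"
  shows "(\<Sum>b\<in>basis (Suc K). E (Y om 2 (dual b)) b) = (\<Sum>c\<in>basis K. E (dual c) (Y om 0 c))"
proof -
  have "(\<Sum>b\<in>basis (Suc K). E (Y om 2 (dual b)) b)
      = (\<Sum>b\<in>basis (Suc K). E (\<Sum>c\<in>basis K. sm (B (Y om 2 (dual b)) c) (dual c)) b)"
    by (intro sum.cong refl arg_cong[where f = "\<lambda>x. E x _"] dual_basis_expansion
        L1_lowers_weight dual_in_W)
  also have "\<dots> = (\<Sum>c\<in>basis K. \<Sum>b\<in>basis (Suc K). B (dual b) (Y om 0 c) * E (dual c) b)"
    by (simp add: bilinear_form_expand_left[OF E] B_L1_adjoint sum.swap[of _ "basis (Suc K)"])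
  also have "\<dots> = (\<Sum>c\<in>basis K. E (dual c) (\<Sum>b\<in>basis (Suc K). sm (B (dual b) (Y om 0 c)) b))"
    by (simp add: bilinear_form_expand_right[OF E])
  also have "\<dots> = (\<Sum>c\<in>basis K. E (dual c) (Y om 0 c))"
    using basis_subset by (intro sum.cong refl arg_cong[where f = "E _"] basis_expansion[symmetric]
        L_minus1_raises_weight) blast
  finally show ?thesis .
qed

lemma dual_basis_L1_transfer_right:
  assumes E: "bilinear_form E"
  shows "(\<Sum>b\<in>basis (Suc K). E (dual b) (Y om 2 b)) = (\<Sum>c\<in>basis K. E (Y om 0 (dual c)) c)"
proof -
  have "(\<Sum>b\<in>basis (Suc K). E (dual b) (Y om 2 b))
      = (\<Sum>b\<in>basis (Suc K). E (dual b) (\<Sum>c\<in>basis K. sm (B (dual c) (Y om 2 b)) c))"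
    using basis_subset by (intro sum.cong refl arg_cong[where f = "E _"] basis_expansion
        L1_lowers_weight) blast
  also have "\<dots> = (\<Sum>c\<in>basis K. \<Sum>b\<in>basis (Suc K). B (Y om 0 (dual c)) b * E (dual b) c)"
    by (simp add: bilinear_form_expand_right[OF E] B_L_minus1_adjoint sum.swap[of _ "basis (Suc K)"])
  also have "\<dots> = (\<Sum>c\<in>basis K. E (\<Sum>b\<in>basis (Suc K). sm (B (Y om 0 (dual c)) b) (dual b)) c)"
    by (simp add: bilinear_form_expand_left[OF E])
  also have "\<dots> = (\<Sum>c\<in>basis K. E (Y om 0 (dual c)) c)"
    by (intro sum.cong refl arg_cong[where f = "\<lambda>x. E x _"] dual_basis_expansion[symmetric]
        L_minus1_raises_weight dual_in_W)
  finally show ?thesis .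
qed

lemma dual_basis_L1_weight0:
  assumes E: "bilinear_form E"
  shows "(\<Sum>b\<in>basis 0. E (Y om 2 (dual b)) b + E (dual b) (Y om 2 b)) = 0"
proof -
  have "E 0 y = 0" "E y 0 = 0" for y
    using bilinear_form_expand_left[OF E, where C = "{}"] bilinear_form_expand_right[OF E, where C = "{}"]
    by simp_all
  moreover have "Y om 2 (dual b) = 0" "Y om 2 b = 0" if "b \<in> basis 0" for b
    using that L1_weight0 dual_in_W basis_subset by blast+
  ultimately show ?thesis by simp
qed

section \<open>Genus zero Ward identities\<close>

lemma mode_product_zero [simp]: "mode_product Y js V M 0 = 0"
  by (induct js) simp_all

lemma mode_product_slot_linear:
  assumes "distinct js" "j \<in> set js"
  shows "Vector_Spaces.linear sm sm (\<lambda>u. mode_product Y js (V(j := u)) M x)"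
  using assms
proof (induct js)
  case (Cons i js)
  show ?case
  proof (cases "i = j")
    case True
    with Cons.prems have "j \<notin> set js" by simp
    then have "(\<lambda>u. mode_product Y (i # js) (V(j := u)) M x) = (\<lambda>u. Y u (M j) (mode_product Y js V M x))"
      using True by (simp add: mode_product_upd_notin)
    then show ?thesis by (simp only: Y_linear_state)
  next
    case False
    have "Vector_Spaces.linear sm sm (\<lambda>u. mode_product Y js (V(j := u)) M x)"
      by (rule Cons.hyps) (use Cons.prems False in auto)
    note linear_compose = Vector_Spaces.linear_compose[OF this Y_linear]
    have "(\<lambda>u. mode_product Y (i # js) (V(j := u)) M x)
        = Y (V i) (M i) \<circ> (\<lambda>u. mode_product Y js (V(j := u)) M x)"
      using False by (simp add: fun_eq_iff)
    then show ?thesis by (simp only: linear_compose)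
  qed
qed simp

lemma mode_product_slot_L_minus1:
  assumes "distinct js" "j \<in> set js"
  shows "mode_product Y js (V(j := Y om 0 u)) M x
       = sm (- of_int (M j)) (mode_product Y js (V(j := u)) (M(j := M j - 1)) x)"
  using assms
proof (induct js)
  case (Cons i js)
  show ?case
  proof (cases "i = j")
    case True
    with Cons.prems have "j \<notin> set js" by simp
    show ?thesis
      unfolding True mode_product.simps fun_upd_same mode_product_upd_notin[OF \<open>j \<notin> set js\<close>]
      by (rule L_minus1_derivative)
  next
    case False
    with Cons show ?thesis by (simp add: Y_scale Y_neg)
  qed
qed simp

lemma omega_mode_product_commutator:
  assumes "distinct js"
    and "\<And>j y. j \<in> set js \<Longrightarrow> Y om p (Y (V j) (M j) y)
         = Y (V j) (M j) (Y om p y) + (\<Sum>t\<in>T. sm (c t j) (Y (V' t j) (M' t j) y))"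
  shows "Y om p (mode_product Y js V M x) = mode_product Y js V M (Y om p x)
     + (\<Sum>j\<in>set js. \<Sum>t\<in>T. sm (c t j) (mode_product Y js (V(j := V' t j)) (M(j := M' t j)) x))"
  using assms
proof (induct js)
  case (Cons i js)
  have i: "i \<notin> set js" using Cons.prems by simp
  have IH: "Y om p (mode_product Y js V M x) = mode_product Y js V M (Y om p x)
     + (\<Sum>j\<in>set js. \<Sum>t\<in>T. sm (c t j) (mode_product Y js (V(j := V' t j)) (M(j := M' t j)) x))"
    by (rule Cons.hyps) (use Cons.prems in auto)
  let ?P = "mode_product Y js V M x"
  let ?ins = "\<lambda>js j t. mode_product Y js (V(j := V' t j)) (M(j := M' t j)) x"
  have old: "Y (V i) (M i) (\<Sum>j\<in>set js. \<Sum>t\<in>T. sm (c t j) (?ins js j t))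
      = (\<Sum>j\<in>set js. \<Sum>t\<in>T. sm (c t j) (?ins (i # js) j t))"
    unfolding Y_sum Y_scale using i by (intro sum.cong refl) auto
  have new: "Y (V' t i) (M' t i) ?P = ?ins (i # js) i t" for t
    using i by (simp add: mode_product_upd_notin)
  have "Y om p (mode_product Y (i # js) V M x)
      = Y (V i) (M i) (Y om p ?P) + (\<Sum>t\<in>T. sm (c t i) (Y (V' t i) (M' t i) ?P))"
    using Cons.prems(2)[of i ?P] by simp
  also have "\<dots> = mode_product Y (i # js) V M (Y om p x)
      + (\<Sum>j\<in>set js. \<Sum>t\<in>T. sm (c t j) (?ins (i # js) j t)) + (\<Sum>t\<in>T. sm (c t i) (?ins (i # js) i t))"
    unfolding IH Y_add old new by simp
  finally show ?case
    by (simp only: list.set(2) sum.insert[OF List.finite_set i] add_ac)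
qed simp

lemma ward_L_minus1:
  assumes "distinct js"
  shows "(\<Sum>j\<in>set js. - of_int (M j) * B vac (mode_product Y js V (M(j := M j - 1)) vac)) = 0"
proof -
  have "Y om 0 (mode_product Y js V M vac) = mode_product Y js V M (Y om 0 vac)
     + (\<Sum>j\<in>set js. \<Sum>t\<in>{()}. sm (- of_int (M j)) (mode_product Y js (V(j := V j)) (M(j := M j - 1)) vac))"
    by (rule omega_mode_product_commutator[OF assms]) (use L_minus1_commutator in \<open>simp add: algebra_simps\<close>)
  then have "B vac (Y om 0 (mode_product Y js V M vac))
     = B vac (\<Sum>j\<in>set js. sm (- of_int (M j)) (mode_product Y js V (M(j := M j - 1)) vac))"
    by (simp add: L_vacuum)
  then show ?thesis by (simp add: B_vacuum_L B_sum B_scale B_neg)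
qed

lemma ward_L0:
  assumes "distinct js" and weight: "\<And>j. j \<in> set js \<Longrightarrow> V j \<in> W (wt j)"
  shows "(\<Sum>j\<in>set js. of_nat (wt j) - of_int (M j) - 1) * B vac (mode_product Y js V M vac) = 0"
proof -
  have "Y om 1 (mode_product Y js V M vac) = mode_product Y js V M (Y om 1 vac)
     + (\<Sum>j\<in>set js. \<Sum>t\<in>{()}. sm (of_nat (wt j) - of_int (M j) - 1) (mode_product Y js (V(j := V j)) (M(j := M j)) vac))"
  proof (rule omega_mode_product_commutator[OF assms(1)])
    fix j y
    assume "j \<in> set js"
    from L0_commutator[OF weight[OF this], of "M j" y]
    show "Y om 1 (Y (V j) (M j) y) = Y (V j) (M j) (Y om 1 y)
        + (\<Sum>t\<in>{()}. sm (of_nat (wt j) - of_int (M j) - 1) (Y (V j) (M j) y))"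
      by (simp add: algebra_simps)
  qed
  then have "B vac (Y om 1 (mode_product Y js V M vac))
     = B vac (\<Sum>j\<in>set js. sm (of_nat (wt j) - of_int (M j) - 1) (mode_product Y js V M vac))"
    by (simp add: L_vacuum)
  then show ?thesis by (simp add: B_vacuum_L B_sum B_scale sum_distrib_right)
qed

lemma ward_L1:
  assumes "distinct js" and weight: "\<And>j. j \<in> set js \<Longrightarrow> V j \<in> W (wt j)"
  shows "(\<Sum>j\<in>set js. (2 * of_nat (wt j) - of_int (M j) - 2) * B vac (mode_product Y js V (M(j := M j + 1)) vac)
       + B vac (mode_product Y js (V(j := Y om 2 (V j))) M vac)) = 0"
proof -
  have "Y om 2 (mode_product Y js V M vac) = mode_product Y js V M (Y om 2 vac)
     + (\<Sum>j\<in>set js. \<Sum>t\<in>UNIV. sm (if t then 2 * of_nat (wt j) - of_int (M j) - 2 else 1)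
          (mode_product Y js (V(j := if t then V j else Y om 2 (V j))) (M(j := if t then M j + 1 else M j)) vac))"
  proof (rule omega_mode_product_commutator[OF assms(1)])
    fix j y
    assume "j \<in> set js"
    from L1_commutator[OF weight[OF this], of "M j" y]
    show "Y om 2 (Y (V j) (M j) y) = Y (V j) (M j) (Y om 2 y)
        + (\<Sum>t\<in>UNIV. sm (if t then 2 * of_nat (wt j) - of_int (M j) - 2 else 1)
             (Y (if t then V j else Y om 2 (V j)) (if t then M j + 1 else M j) y))"
      by (simp add: UNIV_bool algebra_simps)
  qed
  then have "B vac (Y om 2 (mode_product Y js V M vac))
     = B vac (\<Sum>j\<in>set js. sm (2 * of_nat (wt j) - of_int (M j) - 2) (mode_product Y js V (M(j := M j + 1)) vac)
          + mode_product Y js (V(j := Y om 2 (V j))) M vac)"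
    by (simp add: L_vacuum UNIV_bool add_ac)
  then show ?thesis by (simp add: B_vacuum_L B_sum B_scale B_add)
qed

section \<open>The genus g Ward identities\<close>

abbreviation Z :: "nat \<Rightarrow> (nat \<Rightarrow> nat) \<Rightarrow> (int \<Rightarrow> int) \<Rightarrow> complex" where
  "Z g \<equiv> genus_Z Y vac B basis dual g"

abbreviation basis_choices :: "nat \<Rightarrow> (nat \<Rightarrow> nat) \<Rightarrow> (nat \<Rightarrow> 'v) set" where
  "basis_choices g k \<equiv> Pi\<^sub>E {1..g} (\<lambda>a. basis (k a))"

definition correlator :: "nat \<Rightarrow> (int \<Rightarrow> 'v) \<Rightarrow> (int \<Rightarrow> int) \<Rightarrow> complex" where
  "correlator g V M = B vac (mode_product Y (handle_indices g) V M vac)"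

lemma Z_supported:
  "supported g k m \<Longrightarrow> Z g k m = (\<Sum>\<beta>\<in>basis_choices g k. correlator g (handle_states dual \<beta>) (mode_index m))"
  unfolding correlator_def by (rule genus_Z_supported)

lemma handle_states_weight:
  assumes "\<beta> \<in> basis_choices g k" "j \<in> Iset g"
  shows "handle_states dual \<beta> j \<in> W (k (nat \<bar>j\<bar>))"
proof -
  have "\<beta> (nat \<bar>j\<bar>) \<in> basis (k (nat \<bar>j\<bar>))"
    using assms nat_abs_in_Iset by blast
  then show ?thesis
    using dual_in_W basis_subset by (auto simp: handle_states_def subset_iff)
qed

lemma L_m1_genus_Z: "L_m1 g (Z g) k m = 0"
proof (cases "supported g k m")
  case False
  then show ?thesis unfolding L_m1_def by (simp add: genus_Z_unsupported supported_upd_m)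
next
  case True
  let ?js = "handle_indices g" and ?M = "mode_index m"
  have "(\<Sum>j\<in>Iset g. of_int (m j + 1) * Z g k (m(j := m j + 1)))
      = (\<Sum>\<beta>\<in>basis_choices g k. \<Sum>j\<in>set ?js. - of_int (?M j)
           * B vac (mode_product Y ?js (handle_states dual \<beta>) (?M(j := ?M j - 1)) vac))"
    unfolding set_handle_indices sum.swap[of _ "Iset g"]
    by (intro sum.cong refl)
       (simp add: Z_supported supported_upd_m True mode_index_upd correlator_def sum_distrib_left
         mode_index_def add.commute)
  also have "\<dots> = 0"
    by (intro sum.neutral ballI ward_L_minus1 distinct_handle_indices)
  finally show ?thesis unfolding L_m1_def by simp
qed

lemma L_0_genus_Z: "L_0 g (Z g) k m = 0"
proof (cases "supported g k m")
  case False
  then show ?thesis unfolding L_0_def by (simp add: genus_Z_unsupported)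
next
  case True
  let ?js = "handle_indices g" and ?M = "mode_index m" and ?wt = "\<lambda>j. k (nat \<bar>j\<bar>)"
  let ?c = "(\<Sum>j\<in>set ?js. of_nat (?wt j) - of_int (?M j) - 1) :: complex"
  have c: "?c = (\<Sum>j\<in>Iset g. of_int (m j)) + 2 * (\<Sum>a\<in>{1..g}. of_nat (k a))"
    by (simp add: set_handle_indices sum_Iset mode_index_def sum.distrib sum_distrib_left algebra_simps)
  have ward: "?c * B vac (mode_product Y ?js (handle_states dual \<beta>) ?M vac) = 0"
    if "\<beta> \<in> basis_choices g k" for \<beta>
    by (rule ward_L0[OF distinct_handle_indices])
       (use handle_states_weight[OF that] in \<open>auto simp: set_handle_indices\<close>)
  have "L_0 g (Z g) k m = - (?c * Z g k m)"
    unfolding L_0_def c by (simp add: sum_distrib_left sum_distrib_right algebra_simps)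
  also have "\<dots> = 0"
    by (simp add: Z_supported[OF True] correlator_def sum_distrib_left ward)
  finally show ?thesis .
qed

lemma correlator_slot_bilinear:
  assumes "a \<in> {1..g}"
  shows "bilinear_form (\<lambda>p q. correlator g (V(- int a := p, int a := q)) M)"
proof -
  have slots: "- int a \<in> set (handle_indices g)" "int a \<in> set (handle_indices g)"
    using pm_in_Iset[OF assms] by (simp_all add: set_handle_indices)
  have twist: "V(- int a := p, int a := q) = V(int a := q, - int a := p)" for p q
    using assms by (intro fun_upd_twist) simp
  have "Vector_Spaces.linear sm (*) (B vac \<circ> (\<lambda>p. mode_product Y (handle_indices g) (V(int a := q, - int a := p)) M vac))"
    for q by (intro Vector_Spaces.linear_compose[OF _ B_linear] mode_product_slot_linear
        distinct_handle_indices slots)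
  moreover have "Vector_Spaces.linear sm (*) (B vac \<circ> (\<lambda>q. mode_product Y (handle_indices g) (V(- int a := p, int a := q)) M vac))"
    for p by (intro Vector_Spaces.linear_compose[OF _ B_linear] mode_product_slot_linear
        distinct_handle_indices slots)
  ultimately show ?thesis
    unfolding bilinear_form_def correlator_def twist by (simp add: o_def)
qed

lemma correlator_L_minus1_slot:
  "j \<in> Iset g \<Longrightarrow> correlator g (V(j := Y om 0 u)) M
     = - of_int (M j) * correlator g (V(j := u)) (M(j := M j - 1))"
  unfolding correlator_def
  by (simp add: mode_product_slot_L_minus1 distinct_handle_indices set_handle_indices B_scale B_neg)

lemma sum_handle_L1_insertions:
  assumes a: "a \<in> {1..g}"
  shows "(\<Sum>\<beta>\<in>basis_choices g k.
            correlator g ((handle_states dual \<beta>)(int a := Y om 2 (handle_states dual \<beta> (int a)))) M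
          + correlator g ((handle_states dual \<beta>)(- int a := Y om 2 (handle_states dual \<beta> (- int a)))) M)
    = (\<Sum>\<beta>\<in>Pi\<^sub>E ({1..g} - {a}) (\<lambda>i. basis (k i)). \<Sum>x\<in>basis (k a).
            correlator g ((handle_states dual \<beta>)(- int a := Y om 2 (dual x), int a := x)) M
          + correlator g ((handle_states dual \<beta>)(- int a := dual x, int a := Y om 2 x)) M)"
proof -
  have "1 \<le> a" "- int a \<noteq> int a" using a by simp_all
  then have upd:
      "(handle_states dual (\<beta>(a := x)))(int a := Y om 2 (handle_states dual (\<beta>(a := x)) (int a)))
     = (handle_states dual \<beta>)(- int a := dual x, int a := Y om 2 x)"
      "(handle_states dual (\<beta>(a := x)))(- int a := Y om 2 (handle_states dual (\<beta>(a := x)) (- int a)))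
     = (handle_states dual \<beta>)(- int a := Y om 2 (dual x), int a := x)" for \<beta> x
    by (auto simp: handle_states_upd fun_eq_iff)
  show ?thesis
    unfolding sum_PiE_remove[OF a] upd by (subst sum.swap) (simp add: add.commute)
qed

lemma Z_lowered_weight:
  assumes a: "a \<in> {1..g}" and "supported g k m" and "k a = Suc K" and "j \<in> Iset g"
  shows "Z g (k(a := K)) (m(j := m j + 1))
       = (\<Sum>c\<in>basis K. \<Sum>\<beta>\<in>Pi\<^sub>E ({1..g} - {a}) (\<lambda>i. basis (k i)).
            correlator g (handle_states dual (\<beta>(a := c))) ((mode_index m)(j := mode_index m j - 1)))"
proof -
  let ?M' = "(mode_index m)(j := mode_index m j - 1)"
  have "supported g (k(a := K)) (m(j := m j + 1))"
    using assms by (simp add: supported_upd_m supported_upd_k)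
  then have "Z g (k(a := K)) (m(j := m j + 1))
      = (\<Sum>\<beta>\<in>Pi\<^sub>E {1..g} (\<lambda>i. basis ((k(a := K)) i)). correlator g (handle_states dual \<beta>) ?M')"
    by (simp add: Z_supported mode_index_upd mode_index_def)
  also have "\<dots> = (\<Sum>c\<in>basis K. \<Sum>\<beta>\<in>Pi\<^sub>E ({1..g} - {a}) (\<lambda>i. basis ((k(a := K)) i)).
      correlator g (handle_states dual (\<beta>(a := c))) ?M')"
    unfolding sum_PiE_remove[OF a] fun_upd_same ..
  also have "Pi\<^sub>E ({1..g} - {a}) (\<lambda>i. basis ((k(a := K)) i)) = Pi\<^sub>E ({1..g} - {a}) (\<lambda>i. basis (k i))"
    by (rule PiE_cong) simp
  finally show ?thesis .
qed

lemma correlator_handle_L_minus1: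
  assumes a: "a \<in> {1..g}"
  shows "correlator g ((handle_states dual \<beta>)(- int a := dual c, int a := Y om 0 c)) (mode_index m)
      = of_int (m (int a) + 1)
        * correlator g (handle_states dual (\<beta>(a := c))) ((mode_index m)(int a := mode_index m (int a) - 1))"
    and "correlator g ((handle_states dual \<beta>)(- int a := Y om 0 (dual c), int a := c)) (mode_index m)
      = of_int (m (- int a) + 1)
        * correlator g (handle_states dual (\<beta>(a := c))) ((mode_index m)(- int a := mode_index m (- int a) - 1))"
proof -
  have pm: "int a \<in> Iset g" "- int a \<in> Iset g" "1 \<le> a" "- int a \<noteq> int a"
    using pm_in_Iset[OF a] a by simp_all
  show "correlator g ((handle_states dual \<beta>)(- int a := dual c, int a := Y om 0 c)) (mode_index m)
      = of_int (m (int a) + 1)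
        * correlator g (handle_states dual (\<beta>(a := c))) ((mode_index m)(int a := mode_index m (int a) - 1))"
    unfolding correlator_L_minus1_slot[OF pm(1)] handle_states_upd[OF pm(3)]
    by (simp add: mode_index_def)
  show "correlator g ((handle_states dual \<beta>)(- int a := Y om 0 (dual c), int a := c)) (mode_index m)
      = of_int (m (- int a) + 1)
        * correlator g (handle_states dual (\<beta>(a := c))) ((mode_index m)(- int a := mode_index m (- int a) - 1))"
    unfolding fun_upd_twist[OF pm(4)] correlator_L_minus1_slot[OF pm(2)] handle_states_upd[OF pm(3)]
    by (simp add: mode_index_def fun_upd_twist[OF pm(4)])
qed

lemma handle_L1_insertions:
  assumes a: "a \<in> {1..g}" and supp: "supported g k m"
  shows "(\<Sum>\<beta>\<in>basis_choices g k.
            correlator g ((handle_states dual \<beta>)(int a := Y om 2 (handle_states dual \<beta> (int a)))) (mode_index m)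
          + correlator g ((handle_states dual \<beta>)(- int a := Y om 2 (handle_states dual \<beta> (- int a)))) (mode_index m))
    = (if 1 \<le> k a then
         of_int (m (int a) + 1) * Z g (k(a := k a - 1)) (m(int a := m (int a) + 1))
       + of_int (m (- int a) + 1) * Z g (k(a := k a - 1)) (m(- int a := m (- int a) + 1))
       else 0)"
proof -
  let ?M = "mode_index m" and ?J = "Pi\<^sub>E ({1..g} - {a}) (\<lambda>i. basis (k i))"
  define E where "E \<beta> p q = correlator g ((handle_states dual \<beta>)(- int a := p, int a := q)) ?M" for \<beta> p q
  have E: "bilinear_form (E \<beta>)" for \<beta>
    unfolding E_def by (rule correlator_slot_bilinear[OF a])
  have split: "(\<Sum>\<beta>\<in>basis_choices g k.
            correlator g ((handle_states dual \<beta>)(int a := Y om 2 (handle_states dual \<beta> (int a)))) ?M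
          + correlator g ((handle_states dual \<beta>)(- int a := Y om 2 (handle_states dual \<beta> (- int a)))) ?M)
      = (\<Sum>\<beta>\<in>?J. \<Sum>x\<in>basis (k a). E \<beta> (Y om 2 (dual x)) x + E \<beta> (dual x) (Y om 2 x))"
    unfolding sum_handle_L1_insertions[OF a] E_def ..
  show ?thesis
  proof (cases "k a")
    case 0
    then show ?thesis unfolding split using dual_basis_L1_weight0[OF E] by simp
  next
    case (Suc K)
    have pm: "int a \<in> Iset g" "- int a \<in> Iset g"
      using pm_in_Iset[OF a] by simp_all
    have "(\<Sum>\<beta>\<in>?J. \<Sum>x\<in>basis (k a). E \<beta> (Y om 2 (dual x)) x + E \<beta> (dual x) (Y om 2 x))
        = (\<Sum>\<beta>\<in>?J. \<Sum>c\<in>basis K. E \<beta> (dual c) (Y om 0 c) + E \<beta> (Y om 0 (dual c)) c)"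
      unfolding Suc sum.distrib dual_basis_L1_transfer_left[OF E] dual_basis_L1_transfer_right[OF E] ..
    also have "\<dots> = of_int (m (int a) + 1) * Z g (k(a := K)) (m(int a := m (int a) + 1))
        + of_int (m (- int a) + 1) * Z g (k(a := K)) (m(- int a := m (- int a) + 1))"
      unfolding E_def correlator_handle_L_minus1[OF a] Z_lowered_weight[OF a supp Suc pm(1)] Z_lowered_weight[OF a supp Suc pm(2)]
      by (subst sum.swap) (simp add: sum.distrib sum_distrib_left)
    finally show ?thesis unfolding split using Suc by simp
  qed
qed

lemma lowered_weight_terms_eq_L1_insertions:
  assumes supp: "supported g k m"
  shows "(\<Sum>j\<in>Iset g. if 1 \<le> k (nat \<bar>j\<bar>)
        then of_int (m j + 1) * Z g (k(nat \<bar>j\<bar> := k (nat \<bar>j\<bar>) - 1)) (m(j := m j + 1)) else 0)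
      = (\<Sum>j\<in>Iset g. \<Sum>\<beta>\<in>basis_choices g k.
           correlator g ((handle_states dual \<beta>)(j := Y om 2 (handle_states dual \<beta> j))) (mode_index m))"
  unfolding sum_Iset sum.distrib[symmetric]
proof (intro sum.cong refl)
  fix a assume a: "a \<in> {1..g}"
  let ?hs = "handle_states dual"
  show "(if 1 \<le> k (nat \<bar>int a\<bar>)
        then of_int (m (int a) + 1) * Z g (k(nat \<bar>int a\<bar> := k (nat \<bar>int a\<bar>) - 1)) (m(int a := m (int a) + 1))
        else 0)
      + (if 1 \<le> k (nat \<bar>- int a\<bar>)
        then of_int (m (- int a) + 1) * Z g (k(nat \<bar>- int a\<bar> := k (nat \<bar>- int a\<bar>) - 1)) (m(- int a := m (- int a) + 1))
        else 0)
    = (\<Sum>\<beta>\<in>basis_choices g k. correlator g ((?hs \<beta>)(int a := Y om 2 (?hs \<beta> (int a)))) (mode_index m)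
        + correlator g ((?hs \<beta>)(- int a := Y om 2 (?hs \<beta> (- int a)))) (mode_index m))"
    unfolding handle_L1_insertions[OF a supp] by simp
qed

lemma genus_ward_L1:
  assumes supp: "supported g k m"
  shows "(\<Sum>j\<in>Iset g. (2 * of_nat (k (nat \<bar>j\<bar>)) + of_int (m j) - 1) * Z g k (m(j := m j - 1))
     + (\<Sum>\<beta>\<in>basis_choices g k.
          correlator g ((handle_states dual \<beta>)(j := Y om 2 (handle_states dual \<beta> j))) (mode_index m))) = 0"
proof -
  let ?js = "handle_indices g" and ?M = "mode_index m" and ?hs = "handle_states dual"
  let ?c = "\<lambda>j. 2 * of_nat (k (nat \<bar>j\<bar>)) + of_int (m j) - 1 :: complex"
  have lowered: "Z g k (m(j := m j - 1)) = (\<Sum>\<beta>\<in>basis_choices g k. correlator g (?hs \<beta>) (?M(j := ?M j + 1)))"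
    if "j \<in> Iset g" for j
  proof -
    have "mode_index (m(j := m j - 1)) = ?M(j := ?M j + 1)"
      by (simp add: mode_index_upd mode_index_def)
    then show ?thesis
      using Z_supported[of g k "m(j := m j - 1)"] supp supported_upd_m[OF that] by simp
  qed
  have "(\<Sum>j\<in>Iset g. ?c j * Z g k (m(j := m j - 1))
     + (\<Sum>\<beta>\<in>basis_choices g k. correlator g ((?hs \<beta>)(j := Y om 2 (?hs \<beta> j))) ?M))
    = (\<Sum>\<beta>\<in>basis_choices g k. \<Sum>j\<in>Iset g. ?c j * correlator g (?hs \<beta>) (?M(j := ?M j + 1))
       + correlator g ((?hs \<beta>)(j := Y om 2 (?hs \<beta> j))) ?M)"
    unfolding sum.swap[of _ "Iset g"]
    by (intro sum.cong refl) (simp add: lowered sum_distrib_left sum.distrib)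
  also have "\<dots> = (\<Sum>\<beta>\<in>basis_choices g k. \<Sum>j\<in>set ?js.
         (2 * of_nat (k (nat \<bar>j\<bar>)) - of_int (?M j) - 2) * B vac (mode_product Y ?js (?hs \<beta>) (?M(j := ?M j + 1)) vac)
       + B vac (mode_product Y ?js ((?hs \<beta>)(j := Y om 2 (?hs \<beta> j))) ?M vac))"
    unfolding set_handle_indices correlator_def
    by (intro sum.cong refl) (simp add: mode_index_def algebra_simps)
  also have "\<dots> = 0"
  proof (rule sum.neutral, rule ballI)
    fix \<beta> assume \<beta>: "\<beta> \<in> basis_choices g k"
    show "(\<Sum>j\<in>set ?js.
         (2 * of_nat (k (nat \<bar>j\<bar>)) - of_int (?M j) - 2) * B vac (mode_product Y ?js (?hs \<beta>) (?M(j := ?M j + 1)) vac)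
       + B vac (mode_product Y ?js ((?hs \<beta>)(j := Y om 2 (?hs \<beta> j))) ?M vac)) = 0"
      using handle_states_weight[OF \<beta>]
      by (intro ward_L1 distinct_handle_indices) (simp add: set_handle_indices)
  qed
  finally show ?thesis .
qed

lemma L_1_genus_Z: "L_1 g (Z g) k m = 0"
proof (cases "supported g k m")
  case False
  have "Z g (k(nat \<bar>j\<bar> := y)) (m(j := x)) = 0" if "j \<in> Iset g" for j x y
    using False nat_abs_in_Iset[OF that]
    by (simp add: genus_Z_unsupported supported_upd_m[OF that] supported_upd_k)
  then have "(\<Sum>j\<in>Iset g. if 1 \<le> k (nat \<bar>j\<bar>)
        then of_int (m j + 1) * Z g (k(nat \<bar>j\<bar> := k (nat \<bar>j\<bar>) - 1)) (m(j := m j + 1)) else 0) = 0"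
    by (intro sum.neutral ballI) simp
  then show ?thesis
    unfolding L_1_def using False pm_in_Iset
    by (simp add: genus_Z_unsupported supported_upd_m)
next
  case True
  let ?hs = "handle_states dual"
  define insertion where "insertion j = (\<Sum>\<beta>\<in>basis_choices g k.
      correlator g ((?hs \<beta>)(j := Y om 2 (?hs \<beta> j))) (mode_index m))" for j
  note raised = lowered_weight_terms_eq_L1_insertions[OF True, folded insertion_def]
  have weights: "(\<Sum>a\<in>{1..g}. of_nat (k a) * (Z g k (m(int a := m (int a) - 1)) + Z g k (m(- int a := m (- int a) - 1))))
      = (\<Sum>j\<in>Iset g. of_nat (k (nat \<bar>j\<bar>)) * Z g k (m(j := m j - 1)))"
    unfolding sum_Iset by (simp add: distrib_left)
  have "L_1 g (Z g) k m = - (\<Sum>j\<in>Iset g. (2 * of_nat (k (nat \<bar>j\<bar>)) + of_int (m j) - 1) * Z g k (m(j := m j - 1))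
     + insertion j)"
    unfolding L_1_def sum.distrib raised weights
    by (simp add: sum_distrib_left sum.distrib sum_subtractf algebra_simps)
  then show ?thesis
    using genus_ward_L1[OF True] by (simp add: insertion_def)
qed

end

theorem mainTheorem6:
  fixes sm :: "complex \<Rightarrow> 'v::ab_group_add \<Rightarrow> 'v"
    and Y :: "'v \<Rightarrow> int \<Rightarrow> 'v \<Rightarrow> 'v"
    and vac om :: 'v
    and B :: "'v \<Rightarrow> 'v \<Rightarrow> complex"
    and basis :: "nat \<Rightarrow> 'v set"
    and dual :: "'v \<Rightarrow> 'v"
    and g :: nat
  assumes "is_VOA sm Y vac om"
    and "simple_VOA sm Y"
    and "self_dual sm Y om"
    and "strong_CFT_type sm Y vac om"
    and "invariant_form sm Y om B"
    and "B vac vac = 1"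
    and "\<And>n. finite (basis n) \<and> basis n \<subseteq> wt_space sm Y om n
            \<and> \<not> module.dependent sm (basis n) \<and> module.span sm (basis n) = wt_space sm Y om n"
    and "\<And>n b b'. b \<in> basis n \<Longrightarrow> b' \<in> basis n \<Longrightarrow>
            dual b \<in> wt_space sm Y om n \<and> B (dual b) b' = (if b = b' then 1 else 0)"
    and "1 \<le> g"
  shows "\<forall>k m. L_m1 g (genus_Z Y vac B basis dual g) k m = 0
             \<and> L_0 g (genus_Z Y vac B basis dual g) k m = 0
             \<and> L_1 g (genus_Z Y vac B basis dual g) k m = 0"
proof -
  interpret VOA_dual_bases sm Y vac om B basis dual
    by (rule VOA_dual_bases.intro) (use assms in blast)+
  show ?thesis
    using L_m1_genus_Z L_0_genus_Z L_1_genus_Z by blast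
qed

end
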